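(* Let $F=\begin{pmatrix}-1&-1&-1\\-1&8&-1\\-1&-1&-1\end{pmatrix}$ (edge detect C filter). Then for all $m,n\in\mathbb{N}$, it is not the case that the equation $F*X=B$ with the reflexive boundary condition, for unknown $X\in\mathbb{R}^{m\times n}$, has a unique solution for every $B\in\mathbb{R}^{m\times n}$.
   Context: For $F=[f_{ij}]\in\mathbb{R}^{3\times3}$ and $X=[x_{ij}]\in\mathbb{R}^{m\times n}$, the convolution $F*X\in\mathbb{R}^{m\times n}$ is defined by $[F*X]_{ij}=\sum_{l_1=1}^3\sum_{l_2=1}^3 f_{l_1l_2}\,x_{i-l_1+2,\,j-l_2+2}$ for $1\le i\le m$, $1\le j\le n$, where the reflexive boundary condition sets $x_{0j}=x_{1j}$, $x_{m+1,j}=x_{mj}$, $x_{i0}=x_{i1}$, $x_{i,n+1}=x_{in}$ (for all indices $i\in\{0,\dots,m+1\}$, $j\in\{0,\dots,n+1\}$, so corners are also determined, e.g. $x_{00}=x_{11}$). *)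

theory Defs
  imports Complex_Main
begin

text \<open>An m x n real matrix is represented as a function nat => nat => real whose
  entries outside the index range {1..m} x {1..n} are zero.\<close>
definition real_mats :: "nat \<Rightarrow> nat \<Rightarrow> (nat \<Rightarrow> nat \<Rightarrow> real) set" where
  "real_mats m n = {X. \<forall>i j. (i \<notin> {1..m} \<or> j \<notin> {1..n}) \<longrightarrow> X i j = 0}"

definition refl_idx :: "nat \<Rightarrow> nat \<Rightarrow> nat" where
  "refl_idx m k = (if k = 0 then 1 else if k = m + 1 then m else k)"

definition conv_refl :: "(nat \<Rightarrow> nat \<Rightarrow> real) \<Rightarrow> nat \<Rightarrow> nat \<Rightarrow> (nat \<Rightarrow> nat \<Rightarrow> real)
    \<Rightarrow> nat \<Rightarrow> nat \<Rightarrow> real" where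
  "conv_refl F m n X i j =
     (if i \<in> {1..m} \<and> j \<in> {1..n} then
        (\<Sum>l1\<in>{1..3}. \<Sum>l2\<in>{1..3}.
            F l1 l2 * X (refl_idx m (i + 2 - l1)) (refl_idx n (j + 2 - l2)))
      else 0)"

definition edgeC :: "nat \<Rightarrow> nat \<Rightarrow> real" where
  "edgeC l1 l2 = (if l1 = 2 \<and> l2 = 2 then 8 else -1)"

end

theory Submission
  imports Defs
begin

text \<open>The entries of the edge detect C filter sum to zero, and the reflexive boundary
  condition extends a constant image by the same constant. Hence convolution with the filter
  maps every constant image to zero, so both the zero matrix and the all-ones matrix solve
  the equation with right-hand side zero.\<close>

definition const_mat :: "nat \<Rightarrow> nat \<Rightarrow> real \<Rightarrow> nat \<Rightarrow> nat \<Rightarrow> real" where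
  "const_mat m n c i j = (if i \<in> {1..m} \<and> j \<in> {1..n} then c else 0)"

lemma const_mat_in_real_mats: "const_mat m n c \<in> real_mats m n"
  by (simp add: const_mat_def real_mats_def)

lemma refl_idx_in_range:
  assumes "i \<in> {1..m}" "l \<in> {1..3}"
  shows "refl_idx m (i + 2 - l) \<in> {1..m}"
  using assms unfolding refl_idx_def by auto

lemma conv_refl_const_mat:
  "conv_refl F m n (const_mat m n c) =
     const_mat m n (c * (\<Sum>l1\<in>{1..3}. \<Sum>l2\<in>{1..3}. F l1 l2))"
proof (intro ext)
  fix i j
  show "conv_refl F m n (const_mat m n c) i j =
      const_mat m n (c * (\<Sum>l1\<in>{1..3}. \<Sum>l2\<in>{1..3}. F l1 l2)) i j"
  proof (cases "i \<in> {1..m} \<and> j \<in> {1..n}")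
    case True
    then have "conv_refl F m n (const_mat m n c) i j =
        (\<Sum>l1\<in>{1..3}. \<Sum>l2\<in>{1..3}.
          F l1 l2 * const_mat m n c (refl_idx m (i + 2 - l1)) (refl_idx n (j + 2 - l2)))"
      by (simp add: conv_refl_def)
    also have "\<dots> = (\<Sum>l1\<in>{1..3}. \<Sum>l2\<in>{1..3}. F l1 l2 * c)"
      using True refl_idx_in_range by (intro sum.cong refl) (simp add: const_mat_def)
    also have "\<dots> = const_mat m n (c * (\<Sum>l1\<in>{1..3}. \<Sum>l2\<in>{1..3}. F l1 l2)) i j"
      using True by (simp add: const_mat_def sum_distrib_left sum_distrib_right mult.commute)
    finally show ?thesis .
  next
    case False
    then show ?thesis
      unfolding conv_refl_def const_mat_def by argo
  qed
qed

lemma conv_refl_not_uniquely_solvable: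
  assumes "(\<Sum>l1\<in>{1..3}. \<Sum>l2\<in>{1..3}. F l1 l2) = 0" and "m \<ge> 1" and "n \<ge> 1"
  shows "\<not> (\<forall>B \<in> real_mats m n. \<exists>!X. X \<in> real_mats m n \<and> conv_refl F m n X = B)"
proof
  let ?O = "const_mat m n 0"
  assume "\<forall>B \<in> real_mats m n. \<exists>!X. X \<in> real_mats m n \<and> conv_refl F m n X = B"
  then have "\<exists>!X. X \<in> real_mats m n \<and> conv_refl F m n X = ?O"
    using const_mat_in_real_mats by blast
  moreover have "conv_refl F m n (const_mat m n c) = ?O" for c
    using assms(1) by (simp add: conv_refl_const_mat)
  ultimately have "const_mat m n 1 = ?O"
    using const_mat_in_real_mats by blast
  then have "const_mat m n 1 1 1 = ?O 1 1"
    by simp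
  then show False
    using assms(2,3) by (simp add: const_mat_def)
qed

lemma edgeC_sum_eq_zero: "(\<Sum>l1\<in>{1..3}. \<Sum>l2\<in>{1..3}. edgeC l1 l2) = 0"
  by (simp add: edgeC_def numeral_3_eq_3 atLeastAtMostSuc_conv)

theorem corollary15:
  fixes m n :: nat
  assumes "m \<ge> 1" and "n \<ge> 1"
  shows "\<not> (\<forall>B \<in> real_mats m n. \<exists>!X. X \<in> real_mats m n \<and> conv_refl edgeC m n X = B)"
  using conv_refl_not_uniquely_solvable[OF edgeC_sum_eq_zero assms] .

end
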